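(* Consider the least-squares approximate policy iteration sequence described in the context, and suppose $m+H-1>\log(\delta_{FV})/\log(1/\alpha)$ (with $\delta_{FV}<\infty$). Define $$\tau:=\frac{\alpha^m+\alpha^{m+H-1}}{1-\alpha}\delta_{FV}+\delta_{app}+\delta_{FV}\epsilon_{PE},\qquad \beta:=\alpha^{m+H-1}\delta_{FV}.$$ Then for every $k\ge1$, $$\|J^{\mu_k}-J^*\|_\infty \le \frac{\alpha^{kH}}{1-\alpha}+\frac{2\alpha^H\|J^{\mu_0}-J_0\|_\infty}{1-\alpha}\,k\,\max(\alpha^H,\beta)^{k-1} + \frac{2\alpha^H\frac{\tau}{1-\beta}+\epsilon_{LA}}{(1-\alpha^H)(1-\alpha)}.$$
   Context: Consider a Markov decision process with finite state space $S$, finite action space $A$, transition probabilities $P_{ij}(a)$, rewards $r(s,a)\in[0,1]$, and discount factor $\alpha\in(0,1)$. A (deterministic stationary) policy is a map $\mu:S\to A$; its value is $J^\mu(s)=E[\sum_{t\ge0}\alpha^t r(s_t,\mu(s_t))\mid s_0=s]$, and $J^*(s)=\max_\mu J^\mu(s)$. For a policy $\mu$, $(T_\mu J)(s)=r(s,\mu(s))+\alpha\sum_j P_{sj}(\mu(s))J(j)$; the Bellman operator is $(TJ)(s)=\max_{a\in A}\{r(s,a)+\alpha\sum_j P_{sj}(a)J(j)\}$; powers denote repeated application. $\|\cdot\|_\infty$ denotes the max norm and the induced matrix norm. Least-squares approximate policy iteration: fix integers $m\ge1$, $H\ge1$, constants $\epsilon_{LA},\epsilon_{PE}\ge0$, a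 feature matrix $\Phi\in\mathbb{R}^{|S|\times d}$ whose row $i$ is $\phi(i)^\top$, and subsets $D_k\subseteq S$ ($k\ge0$) such that $\{\phi(i)\}_{i\in D_k}$ has rank $d$. Let $\Phi_{D_k}$ be the submatrix of $\Phi$ with rows indexed by $D_k$, $P_k\in\{0,1\}^{|D_k|\times|S|}$ the matrix selecting the coordinates in $D_k$, and $\mathcal{M}_{k+1}:=\Phi(\Phi_{D_k}^\top\Phi_{D_k})^{-1}\Phi_{D_k}^\top P_k$ for $k\ge0$. Start with arbitrary $J_0\in\mathbb{R}^{|S|}$ and an arbitrary policy $\mu_0$. For each $k\ge0$: $\mu_{k+1}$ is any policy with $\|T^HJ_k-T_{\mu_{k+1}}T^{H-1}J_k\|_\infty\le\epsilon_{LA}$; $w_{k+1}\in\mathbb{R}^{|S|}$ is a noise vector with $w_{k+1}(i)=0$ for $i\notin D_k$ and $\|w_{k+1}\|_\infty\le\epsilon_{PE}$; and $J_{k+1}=\mathcal{M}_{k+1}(T^m_{\mu_{k+1}}T^{H-1}J_k+w_{k+1})$ (equivalently $J_{k+1}=\Phi\theta_{k+1}$ where $\theta_{k+1}$ minimizes $\sum_{i\in D_k}((\Phi\theta)(i)-\hat J_{k+1}(i))^2$ with $\hat J_{k+1}=T^m_{\mu_{k+1}}T^{H-1}J_k+w_{k+1}$). Define $\delta_{FV}:=\sup_{k\ge1}\|\mathcal{M}_k\|_\infty$ and $\delta_{app}:=\sup_{k\ge1}\sup_{\mu}\|\mathcal{M}_kJ^\mu-J^\mu\|_\infty$, the inner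 supremum over all policies. *)

theory Defs
  imports "HOL-Analysis.Analysis"
begin

definition supnorm :: "('s::finite \<Rightarrow> real) \<Rightarrow> real" where
  "supnorm J = Max (range (\<lambda>s. \<bar>J s\<bar>))"

definition opnorm :: "(('s::finite \<Rightarrow> real) \<Rightarrow> ('s \<Rightarrow> real)) \<Rightarrow> real" where
  "opnorm M = Sup {supnorm (M x) | x. supnorm x \<le> 1}"

text \<open>MDP data: P a i j = P_{ij}(a), r s a, discount al.\<close>
definition Tpol :: "('a \<Rightarrow> 's \<Rightarrow> 's \<Rightarrow> real) \<Rightarrow> ('s \<Rightarrow> 'a \<Rightarrow> real) \<Rightarrow> real
   \<Rightarrow> ('s::finite \<Rightarrow> 'a) \<Rightarrow> ('s \<Rightarrow> real) \<Rightarrow> ('s \<Rightarrow> real)" where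
  "Tpol P r al mu J = (\<lambda>s. r s (mu s) + al * (\<Sum>j\<in>UNIV. P (mu s) s j * J j))"

definition Tbell :: "('a::finite \<Rightarrow> 's \<Rightarrow> 's \<Rightarrow> real) \<Rightarrow> ('s \<Rightarrow> 'a \<Rightarrow> real) \<Rightarrow> real
   \<Rightarrow> ('s::finite \<Rightarrow> real) \<Rightarrow> ('s \<Rightarrow> real)" where
  "Tbell P r al J = (\<lambda>s. Max (range (\<lambda>a. r s a + al * (\<Sum>j\<in>UNIV. P a s j * J j))))"

fun pstep :: "('a \<Rightarrow> 's \<Rightarrow> 's \<Rightarrow> real) \<Rightarrow> ('s::finite \<Rightarrow> 'a) \<Rightarrow> nat \<Rightarrow> 's \<Rightarrow> 's \<Rightarrow> real" where
  "pstep P mu 0 s j = (if s = j then 1 else 0)"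
| "pstep P mu (Suc n) s j = (\<Sum>l\<in>UNIV. P (mu s) s l * pstep P mu n l j)"

text \<open>J^mu(s) = E[sum_t al^t r(s_t, mu(s_t)) | s_0 = s], written out.\<close>
definition Jpol :: "('a \<Rightarrow> 's \<Rightarrow> 's \<Rightarrow> real) \<Rightarrow> ('s \<Rightarrow> 'a \<Rightarrow> real) \<Rightarrow> real
   \<Rightarrow> ('s::finite \<Rightarrow> 'a) \<Rightarrow> ('s \<Rightarrow> real)" where
  "Jpol P r al mu = (\<lambda>s. (\<Sum>t. al ^ t * (\<Sum>j\<in>UNIV. pstep P mu t s j * r j (mu j))))"

definition Jstar :: "('a::finite \<Rightarrow> 's \<Rightarrow> 's \<Rightarrow> real) \<Rightarrow> ('s \<Rightarrow> 'a \<Rightarrow> real) \<Rightarrow> real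
   \<Rightarrow> ('s::finite \<Rightarrow> real)" where
  "Jstar P r al = (\<lambda>s. Max (range (\<lambda>mu. Jpol P r al mu s)))"

text \<open>Phi_D^T Phi_D = sum_{i in D} phi(i) phi(i)^T.\<close>
definition gram :: "('s \<Rightarrow> real^'d) \<Rightarrow> 's set \<Rightarrow> real^'d^'d" where
  "gram phi D = (\<Sum>i\<in>D. (\<chi> a b. phi i $ a * phi i $ b))"

text \<open>M J = Phi (Phi_D^T Phi_D)^{-1} Phi_D^T P_D J, where Phi_D^T P_D J = sum_{i in D} J(i) phi(i).\<close>
definition Mproj :: "('s::finite \<Rightarrow> real^'d) \<Rightarrow> 's set \<Rightarrow> ('s \<Rightarrow> real) \<Rightarrow> ('s \<Rightarrow> real)" where
  "Mproj phi D J = (\<lambda>s. phi s \<bullet> (matrix_inv (gram phi D) *v (\<Sum>i\<in>D. J i *\<^sub>R phi i)))"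

end

(*
  Write e_k = ||J_k - J^{mu_k}|| for the evaluation error and a_k = ||J^{mu_k} - J*|| for the
  policy error. Contraction and monotonicity of the Bellman operators give two coupled linear
  recursions. The m-step rollout followed by the least-squares fit gives
  e_{k+1} <= beta e_k + tau, since the fit has norm at most delta_FV and reproduces every policy
  value up to delta_app; the H-step lookahead gives
  a_{k+1} <= alpha^H a_k + (2 alpha^H e_k + eps_LA) / (1 - alpha).
  The hypothesis on m + H - 1 says exactly that beta < 1, and unrolling both recursions yields
  the bound, the convolution of the rates alpha^H and beta producing k max(alpha^H, beta)^(k-1).
*)

theory Submission
  imports Defs
begin

section \<open>Linear recurrences\<close>

lemma linear_recurrence_le:
  fixes x c :: "nat \<Rightarrow> real"
  assumes q: "0 \<le> q" and step: "\<And>k. x (Suc k) \<le> q * x k + c k"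
  shows "x k \<le> q ^ k * x 0 + (\<Sum>i<k. q ^ (k - Suc i) * c i)"
proof (induction k)
  case 0
  show ?case by simp
next
  case (Suc k)
  have "x (Suc k) \<le> q * (q ^ k * x 0 + (\<Sum>i<k. q ^ (k - Suc i) * c i)) + c k"
    using step[of k] mult_left_mono[OF Suc.IH q] by linarith
  also have "\<dots> = q ^ Suc k * x 0 + (\<Sum>i<Suc k. q ^ (Suc k - Suc i) * c i)"
  proof -
    have "q * q ^ (k - Suc i) = q ^ (k - i)" if "i < k" for i
      using that by (simp flip: power_Suc add: Suc_diff_Suc)
    then have "q * (\<Sum>i<k. q ^ (k - Suc i) * c i) = (\<Sum>i<k. q ^ (Suc k - Suc i) * c i)"
      by (simp add: sum_distrib_left mult.assoc[symmetric])
    then show ?thesis by (simp add: algebra_simps)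
  qed
  finally show ?case .
qed

lemma reversed_geometric_sum_le:
  fixes q :: real
  assumes "0 \<le> q" "q < 1"
  shows "(\<Sum>i<k. q ^ (k - Suc i)) \<le> 1 / (1 - q)"
proof -
  have "(\<Sum>i<k. q ^ (k - Suc i)) = (1 - q ^ k) / (1 - q)"
    using one_diff_power_eq'[of q k] assms by simp
  also have "\<dots> \<le> 1 / (1 - q)"
    using assms by (intro divide_right_mono) auto
  finally show ?thesis .
qed

lemma power_convolution_le:
  fixes x y :: real
  assumes "0 \<le> x" "0 \<le> y"
  shows "(\<Sum>i<k. x ^ (k - Suc i) * y ^ i) \<le> real k * max x y ^ (k - 1)"
proof -
  have "x ^ (k - Suc i) * y ^ i \<le> max x y ^ (k - 1)" if "i < k" for i
  proof -
    have "x ^ (k - Suc i) * y ^ i \<le> max x y ^ (k - Suc i) * max x y ^ i"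
      using assms by (intro mult_mono power_mono) auto
    also have "\<dots> = max x y ^ (k - 1)"
      using that by (simp flip: power_add)
    finally show ?thesis .
  qed
  then show ?thesis
    using sum_bounded_above[of "{..<k}" "\<lambda>i. x ^ (k - Suc i) * y ^ i"] by simp
qed

lemma coupled_recurrence_le:
  fixes a e :: "nat \<Rightarrow> real"
  assumes q: "0 \<le> q" "q < 1" and be: "0 \<le> be" "be < 1"
    and nonneg: "0 \<le> tau" "0 \<le> eps" "0 \<le> C" "0 \<le> e 0"
    and e_step: "\<And>k. e (Suc k) \<le> be * e k + tau"
    and a_step: "\<And>k. a (Suc k) \<le> q * a k + C * (2 * q * e k + eps)"
  shows "a k \<le> q ^ k * a 0 + C * (2 * q * e 0) * real k * max q be ^ (k - 1)
                + C * (2 * q * (tau / (1 - be)) + eps) / (1 - q)"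
proof -
  have e_le: "e i \<le> be ^ i * e 0 + tau / (1 - be)" for i
  proof -
    have "e i \<le> be ^ i * e 0 + (\<Sum>j<i. be ^ (i - Suc j) * tau)"
      using linear_recurrence_le[of be e "\<lambda>_. tau"] be e_step by blast
    also have "(\<Sum>j<i. be ^ (i - Suc j) * tau) \<le> tau / (1 - be)"
      using mult_right_mono[OF reversed_geometric_sum_le[OF be] nonneg(1)]
      by (simp add: sum_distrib_right)
    finally show ?thesis by simp
  qed
  define c0 where "c0 = C * (2 * q * e 0)"
  define G where "G = C * (2 * q * (tau / (1 - be)) + eps)"
  have "0 \<le> c0" "0 \<le> G"
    unfolding c0_def G_def using q be nonneg by simp_all
  have c_le: "C * (2 * q * e i + eps) \<le> c0 * be ^ i + G" for i
  proof -
    have "C * (2 * q * e i + eps) \<le> C * (2 * q * (be ^ i * e 0 + tau / (1 - be)) + eps)"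
      using e_le[of i] q nonneg by (intro mult_left_mono add_right_mono) auto
    then show ?thesis unfolding c0_def G_def by (simp add: algebra_simps)
  qed
  have "a k \<le> q ^ k * a 0 + (\<Sum>i<k. q ^ (k - Suc i) * (C * (2 * q * e i + eps)))"
    by (rule linear_recurrence_le[where c="\<lambda>i. C * (2 * q * e i + eps)", OF q(1) a_step])
  also have "\<dots> \<le> q ^ k * a 0 + (\<Sum>i<k. q ^ (k - Suc i) * (c0 * be ^ i + G))"
    using c_le q by (intro add_left_mono sum_mono mult_left_mono) auto
  also have "\<dots> = q ^ k * a 0 + c0 * (\<Sum>i<k. q ^ (k - Suc i) * be ^ i) + G * (\<Sum>i<k. q ^ (k - Suc i))"
    by (simp add: algebra_simps sum.distrib sum_distrib_left)
  also have "\<dots> \<le> q ^ k * a 0 + c0 * (real k * max q be ^ (k - 1)) + G * (1 / (1 - q))"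
    using power_convolution_le[OF q(1) be(1)] reversed_geometric_sum_le[OF q] \<open>0 \<le> c0\<close> \<open>0 \<le> G\<close>
    by (intro add_mono add_left_mono mult_left_mono) auto
  finally show ?thesis unfolding c0_def G_def by simp
qed

section \<open>Sup norm and the least-squares fit\<close>

lemma abs_le_supnorm: "\<bar>X s\<bar> \<le> supnorm X"
  unfolding supnorm_def by (rule Max_ge) auto

lemma supnorm_leI: "(\<And>s. \<bar>X s\<bar> \<le> c) \<Longrightarrow> supnorm X \<le> c"
  unfolding supnorm_def by (subst Max_le_iff) auto

lemma supnorm_nonneg: "0 \<le> supnorm X"
  using abs_le_supnorm[of X] abs_ge_zero order_trans by blast

lemma supnorm_minus_commute: "supnorm (\<lambda>s. X s - Y s) = supnorm (\<lambda>s. Y s - X s)"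
  unfolding supnorm_def by (simp add: abs_minus_commute)

lemma Max_range_attained: "\<exists>a. Max (range (f :: 'b::finite \<Rightarrow> 'c::linorder)) = f a"
proof -
  have "Max (range f) \<in> range f" by (rule Max_in) auto
  then show ?thesis by blast
qed

lemma Min_range_attained: "\<exists>a. Min (range (f :: 'b::finite \<Rightarrow> 'c::linorder)) = f a"
proof -
  have "Min (range f) \<in> range f" by (rule Min_in) auto
  then show ?thesis by blast
qed

lemma abs_Max_range_diff_le:
  fixes f g :: "'b::finite \<Rightarrow> real"
  assumes "\<And>a. \<bar>f a - g a\<bar> \<le> c"
  shows "\<bar>Max (range f) - Max (range g)\<bar> \<le> c"
proof -
  obtain a b where "Max (range f) = f a" "Max (range g) = g b"
    using Max_range_attained by metis
  moreover have "g a \<le> Max (range g)" "f b \<le> Max (range f)"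
    by (auto intro: Max_ge)
  ultimately show ?thesis using assms[of a] assms[of b] by auto
qed

definition Mproj_coeff :: "('s::finite \<Rightarrow> real^'d) \<Rightarrow> 's set \<Rightarrow> 's \<Rightarrow> 's \<Rightarrow> real" where
  "Mproj_coeff phi D t i = phi t \<bullet> (matrix_inv (gram phi D) *v phi i)"

lemma Mproj_eq_sum: "Mproj phi D X t = (\<Sum>i\<in>D. X i * Mproj_coeff phi D t i)"
proof -
  have "matrix_inv (gram phi D) *v (\<Sum>i\<in>D. X i *\<^sub>R phi i)
      = (\<Sum>i\<in>D. X i *\<^sub>R (matrix_inv (gram phi D) *v phi i))"
    by (simp add: linear_sum[OF matrix_vector_mul_linear] matrix_vector_mult_scaleR)
  then show ?thesis unfolding Mproj_def Mproj_coeff_def by (simp add: inner_sum_right)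
qed

lemma Mproj_add: "Mproj phi D (\<lambda>s. X s + Y s) t = Mproj phi D X t + Mproj phi D Y t"
  by (simp add: Mproj_eq_sum sum.distrib algebra_simps)

lemma Mproj_scale: "Mproj phi D (\<lambda>s. X s / c) t = Mproj phi D X t / c"
  by (simp add: Mproj_eq_sum sum_divide_distrib)

lemma bdd_above_Mproj_unit_ball: "bdd_above {supnorm (Mproj phi D X) | X. supnorm X \<le> 1}"
proof (rule bdd_aboveI)
  fix y assume "y \<in> {supnorm (Mproj phi D X) | X. supnorm X \<le> 1}"
  then obtain X where y: "y = supnorm (Mproj phi D X)" and X: "supnorm X \<le> 1" by blast
  show "y \<le> (\<Sum>t\<in>UNIV. \<Sum>i\<in>D. \<bar>Mproj_coeff phi D t i\<bar>)" unfolding y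
  proof (rule supnorm_leI)
    fix t
    have "\<bar>Mproj phi D X t\<bar> \<le> (\<Sum>i\<in>D. \<bar>X i * Mproj_coeff phi D t i\<bar>)"
      unfolding Mproj_eq_sum by (rule sum_abs)
    also have "\<dots> \<le> (\<Sum>i\<in>D. \<bar>Mproj_coeff phi D t i\<bar>)"
    proof (rule sum_mono)
      fix i
      have "\<bar>X i\<bar> \<le> 1" using abs_le_supnorm[of X i] X by simp
      then show "\<bar>X i * Mproj_coeff phi D t i\<bar> \<le> \<bar>Mproj_coeff phi D t i\<bar>"
        by (simp add: abs_mult mult_left_le_one_le)
    qed
    also have "\<dots> \<le> (\<Sum>t\<in>UNIV. \<Sum>i\<in>D. \<bar>Mproj_coeff phi D t i\<bar>)"
      by (rule member_le_sum) (auto intro: sum_nonneg)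
    finally show "\<bar>Mproj phi D X t\<bar> \<le> (\<Sum>t\<in>UNIV. \<Sum>i\<in>D. \<bar>Mproj_coeff phi D t i\<bar>)" .
  qed
qed

lemma supnorm_Mproj_le_opnorm: "supnorm X \<le> 1 \<Longrightarrow> supnorm (Mproj phi D X) \<le> opnorm (Mproj phi D)"
  unfolding opnorm_def by (rule cSup_upper[OF _ bdd_above_Mproj_unit_ball]) blast

lemma opnorm_Mproj_nonneg: "0 \<le> opnorm (Mproj phi D)"
proof -
  have "supnorm (\<lambda>_::'s::finite. 0::real) \<le> 1" by (rule supnorm_leI) simp
  then show ?thesis
    using supnorm_Mproj_le_opnorm supnorm_nonneg order_trans by blast
qed

lemma abs_Mproj_le:
  assumes X: "\<And>s. \<bar>X s\<bar> \<le> c"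
  shows "\<bar>Mproj phi D X t\<bar> \<le> opnorm (Mproj phi D) * c"
proof (cases "c = 0")
  case True
  then have "X = (\<lambda>_. 0)" using X by force
  then show ?thesis using True by (simp add: Mproj_eq_sum)
next
  case False
  then have c: "0 < c" using X[of undefined] by simp
  have "supnorm (\<lambda>s. X s / c) \<le> 1"
    using X c by (intro supnorm_leI) (simp add: abs_divide)
  then have "\<bar>Mproj phi D (\<lambda>s. X s / c) t\<bar> \<le> opnorm (Mproj phi D)"
    using abs_le_supnorm supnorm_Mproj_le_opnorm order_trans by blast
  then show ?thesis using c by (simp add: Mproj_scale abs_divide field_simps)
qed

section \<open>Discounted Markov decision processes\<close>

locale mdp =
  fixes P :: "'a::finite \<Rightarrow> 's::finite \<Rightarrow> 's \<Rightarrow> real"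
    and r :: "'s \<Rightarrow> 'a \<Rightarrow> real"
    and al :: real
  assumes P_nonneg: "\<And>a i j. 0 \<le> P a i j"
    and P_stoch: "\<And>a i. (\<Sum>j\<in>UNIV. P a i j) = 1"
    and r_bounds: "\<And>s a. 0 \<le> r s a \<and> r s a \<le> 1"
    and al_pos: "0 < al" and al_less_1: "al < 1"
begin

abbreviation "Tp \<equiv> Tpol P r al"
abbreviation "Tb \<equiv> Tbell P r al"
abbreviation "Jp \<equiv> Jpol P r al"
abbreviation "Js \<equiv> Jstar P r al"

lemma transition_avg_ge: "(\<And>j. c \<le> Z j) \<Longrightarrow> c \<le> (\<Sum>j\<in>UNIV. P a s j * Z j)"
proof -
  assume "\<And>j. c \<le> Z j"
  then have "(\<Sum>j\<in>UNIV. P a s j * c) \<le> (\<Sum>j\<in>UNIV. P a s j * Z j)"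
    by (intro sum_mono mult_left_mono P_nonneg)
  then show ?thesis using P_stoch by (simp flip: sum_distrib_right)
qed

lemma transition_avg_le: "(\<And>j. Z j \<le> c) \<Longrightarrow> (\<Sum>j\<in>UNIV. P a s j * Z j) \<le> c"
  using transition_avg_ge[of "-c" "\<lambda>j. - Z j" a s] by (simp add: sum_negf)

lemma abs_transition_avg_le: "(\<And>j. \<bar>Z j\<bar> \<le> c) \<Longrightarrow> \<bar>\<Sum>j\<in>UNIV. P a s j * Z j\<bar> \<le> c"
proof -
  assume Z: "\<And>j. \<bar>Z j\<bar> \<le> c"
  have "- c \<le> Z j" "Z j \<le> c" for j using Z[of j] by arith+
  then show ?thesis
    using transition_avg_ge[of "-c" Z a s] transition_avg_le[of Z c a s] by simp
qed

lemma Tpol_diff: "Tp mu X s - Tp mu Y s = al * (\<Sum>j\<in>UNIV. P (mu s) s j * (X j - Y j))"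
  unfolding Tpol_def by (simp add: algebra_simps sum_subtractf)

lemma Tpol_dist_le: "(\<And>j. \<bar>X j - Y j\<bar> \<le> c) \<Longrightarrow> \<bar>Tp mu X s - Tp mu Y s\<bar> \<le> al * c"
  unfolding Tpol_diff using al_pos by (simp add: abs_mult abs_transition_avg_le)

lemma Tpol_funpow_dist_le:
  "(\<And>j. \<bar>X j - Y j\<bar> \<le> c) \<Longrightarrow> \<bar>(Tp mu ^^ n) X s - (Tp mu ^^ n) Y s\<bar> \<le> al ^ n * c"
proof (induction n arbitrary: s)
  case (Suc n)
  have "\<bar>Tp mu ((Tp mu ^^ n) X) s - Tp mu ((Tp mu ^^ n) Y) s\<bar> \<le> al * (al ^ n * c)"
    by (rule Tpol_dist_le) (use Suc in auto)
  then show ?case by simp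
qed simp

lemma Tpol_mono: "(\<And>j. X j \<le> Y j) \<Longrightarrow> Tp mu X s \<le> Tp mu Y s"
proof -
  assume "\<And>j. X j \<le> Y j"
  then have "0 \<le> (\<Sum>j\<in>UNIV. P (mu s) s j * (Y j - X j))"
    by (intro transition_avg_ge) simp
  then have "0 \<le> Tp mu Y s - Tp mu X s" unfolding Tpol_diff using al_pos by simp
  then show ?thesis by simp
qed

lemma Tpol_le_Tbell: "Tp mu X s \<le> Tb X s"
  unfolding Tpol_def Tbell_def by (rule Max_ge) auto

lemma greedy_policy_exists: "\<exists>mu. \<forall>s. Tp mu X s = Tb X s"
proof -
  have "\<forall>s. \<exists>a. Tb X s = r s a + al * (\<Sum>j\<in>UNIV. P a s j * X j)"
    unfolding Tbell_def using Max_range_attained by blast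
  then obtain mu where "\<forall>s. Tb X s = r s (mu s) + al * (\<Sum>j\<in>UNIV. P (mu s) s j * X j)"
    by metis
  then show ?thesis unfolding Tpol_def by auto
qed

lemma Tbell_dist_le: "(\<And>j. \<bar>X j - Y j\<bar> \<le> c) \<Longrightarrow> \<bar>Tb X s - Tb Y s\<bar> \<le> al * c"
  unfolding Tbell_def
proof (rule abs_Max_range_diff_le)
  fix a
  assume "\<And>j. \<bar>X j - Y j\<bar> \<le> c"
  then show "\<bar>r s a + al * (\<Sum>j\<in>UNIV. P a s j * X j) - (r s a + al * (\<Sum>j\<in>UNIV. P a s j * Y j))\<bar>
      \<le> al * c"
    using Tpol_dist_le[of X Y c "\<lambda>_. a" s] unfolding Tpol_def by simp
qed

lemma Tbell_funpow_dist_le: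
  "(\<And>j. \<bar>X j - Y j\<bar> \<le> c) \<Longrightarrow> \<bar>(Tb ^^ n) X s - (Tb ^^ n) Y s\<bar> \<le> al ^ n * c"
proof (induction n arbitrary: s)
  case (Suc n)
  have "\<bar>Tb ((Tb ^^ n) X) s - Tb ((Tb ^^ n) Y) s\<bar> \<le> al * (al ^ n * c)"
    by (rule Tbell_dist_le) (use Suc in auto)
  then show ?case by simp
qed simp

lemma Tbell_mono: "(\<And>j. X j \<le> Y j) \<Longrightarrow> Tb X s \<le> Tb Y s"
proof -
  assume "\<And>j. X j \<le> Y j"
  obtain mu where "\<forall>s. Tp mu X s = Tb X s" using greedy_policy_exists by blast
  then have "Tb X s = Tp mu X s" by simp
  also have "\<dots> \<le> Tp mu Y s" by (rule Tpol_mono) fact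
  also have "\<dots> \<le> Tb Y s" by (rule Tpol_le_Tbell)
  finally show ?thesis .
qed

lemma Tbell_funpow_mono: "(\<And>j. X j \<le> Y j) \<Longrightarrow> (Tb ^^ n) X s \<le> (Tb ^^ n) Y s"
  by (induction n arbitrary: s) (auto intro: Tbell_mono)

lemma discounted_supersolution_ge:
  assumes "\<And>s. al * (\<Sum>j\<in>UNIV. P (mu s) s j * Z j) + c \<le> Z s"
  shows "c / (1 - al) \<le> Z s"
proof -
  obtain s0 where s0: "Min (range Z) = Z s0" using Min_range_attained by blast
  have min: "Z s0 \<le> Z j" for j unfolding s0[symmetric] by (rule Min_le) auto
  then have "Z s0 \<le> (\<Sum>j\<in>UNIV. P (mu s0) s0 j * Z j)" by (rule transition_avg_ge)
  then have "al * Z s0 + c \<le> Z s0"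
    using assms[of s0] al_pos by (smt (verit) mult_left_mono)
  then have "c / (1 - al) \<le> Z s0" using al_less_1 by (simp add: field_simps)
  then show ?thesis using min[of s] by simp
qed

lemma pstep_nonneg: "0 \<le> pstep P mu n s j"
  by (induction n arbitrary: s) (auto intro!: sum_nonneg mult_nonneg_nonneg P_nonneg)

lemma pstep_sum_eq_1: "(\<Sum>j\<in>UNIV. pstep P mu n s j) = 1"
proof (induction n arbitrary: s)
  case 0
  show ?case by (simp add: sum.delta)
next
  case (Suc n)
  have "(\<Sum>j\<in>UNIV. pstep P mu (Suc n) s j) = (\<Sum>l\<in>UNIV. \<Sum>j\<in>UNIV. P (mu s) s l * pstep P mu n l j)"
    using sum.swap[of "\<lambda>j l. P (mu s) s l * pstep P mu n l j" UNIV UNIV] by simp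
  also have "\<dots> = (\<Sum>l\<in>UNIV. P (mu s) s l * (\<Sum>j\<in>UNIV. pstep P mu n l j))"
    by (simp add: sum_distrib_left)
  also have "\<dots> = 1" using Suc P_stoch by simp
  finally show ?case .
qed

definition expected_reward :: "('s \<Rightarrow> 'a) \<Rightarrow> nat \<Rightarrow> 's \<Rightarrow> real" where
  "expected_reward mu t s = (\<Sum>j\<in>UNIV. pstep P mu t s j * r j (mu j))"

lemma expected_reward_bounds: "0 \<le> expected_reward mu t s \<and> expected_reward mu t s \<le> 1"
proof
  show "0 \<le> expected_reward mu t s" unfolding expected_reward_def
    using r_bounds by (intro sum_nonneg mult_nonneg_nonneg pstep_nonneg) auto
  have "expected_reward mu t s \<le> (\<Sum>j\<in>UNIV. pstep P mu t s j * 1)" unfolding expected_reward_def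
    using r_bounds by (intro sum_mono mult_left_mono pstep_nonneg) auto
  then show "expected_reward mu t s \<le> 1" using pstep_sum_eq_1 by simp
qed

lemma expected_reward_0: "expected_reward mu 0 s = r s (mu s)"
proof -
  have "expected_reward mu 0 s = (\<Sum>j\<in>UNIV. if s = j then r j (mu j) else 0)"
    unfolding expected_reward_def by (rule sum.cong) auto
  then show ?thesis by simp
qed

lemma expected_reward_Suc:
  "expected_reward mu (Suc t) s = (\<Sum>l\<in>UNIV. P (mu s) s l * expected_reward mu t l)"
proof -
  have "expected_reward mu (Suc t) s
      = (\<Sum>j\<in>UNIV. \<Sum>l\<in>UNIV. P (mu s) s l * pstep P mu t l j * r j (mu j))"
    unfolding expected_reward_def by (simp add: sum_distrib_right)
  also have "\<dots> = (\<Sum>l\<in>UNIV. \<Sum>j\<in>UNIV. P (mu s) s l * pstep P mu t l j * r j (mu j))"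
    by (rule sum.swap)
  finally show ?thesis unfolding expected_reward_def by (simp add: sum_distrib_left mult.assoc)
qed

lemma summable_expected_reward: "summable (\<lambda>t. al ^ t * expected_reward mu t s)"
proof (rule summable_comparison_test)
  show "\<exists>N. \<forall>t\<ge>N. norm (al ^ t * expected_reward mu t s) \<le> al ^ t"
    using expected_reward_bounds al_pos by (auto simp: abs_mult intro!: mult_left_le)
  show "summable (\<lambda>t. al ^ t)" using al_pos al_less_1 by (intro summable_geometric) auto
qed

lemma Jpol_eq_suminf: "Jp mu s = (\<Sum>t. al ^ t * expected_reward mu t s)"
  unfolding Jpol_def expected_reward_def ..

lemma Jpol_bounds: "0 \<le> Jp mu s \<and> Jp mu s \<le> 1 / (1 - al)"
proof
  show "0 \<le> Jp mu s" unfolding Jpol_eq_suminf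
    using expected_reward_bounds al_pos by (intro suminf_nonneg summable_expected_reward) auto
  have "Jp mu s \<le> (\<Sum>t. al ^ t)" unfolding Jpol_eq_suminf
    using expected_reward_bounds al_pos al_less_1
    by (intro suminf_le summable_expected_reward summable_geometric) (auto intro!: mult_left_le)
  then show "Jp mu s \<le> 1 / (1 - al)" using suminf_geometric[of al] al_pos al_less_1 by simp
qed

lemma Tpol_Jpol: "Tp mu (Jp mu) = Jp mu"
proof
  fix s
  let ?R = "\<lambda>t l. P (mu s) s l * (al ^ t * expected_reward mu t l)"
  have "Jp mu s - r s (mu s) = (\<Sum>t. al ^ Suc t * expected_reward mu (Suc t) s)"
    using suminf_split_head[OF summable_expected_reward, of mu s]
    by (simp add: Jpol_eq_suminf expected_reward_0)
  also have "\<dots> = (\<Sum>t. al * (\<Sum>l\<in>UNIV. ?R t l))"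
    by (simp add: expected_reward_Suc sum_distrib_left mult_ac)
  also have "\<dots> = al * (\<Sum>l\<in>UNIV. \<Sum>t. ?R t l)"
    by (simp add: suminf_mult suminf_sum summable_sum summable_mult summable_expected_reward)
  also have "\<dots> = al * (\<Sum>l\<in>UNIV. P (mu s) s l * Jp mu l)"
    by (simp add: Jpol_eq_suminf suminf_mult summable_expected_reward)
  finally show "Tp mu (Jp mu) s = Jp mu s" unfolding Tpol_def by simp
qed

lemma Tpol_funpow_Jpol: "(Tp mu ^^ n) (Jp mu) = Jp mu"
  by (induction n) (simp_all add: Tpol_Jpol)

lemma Jpol_ge_of_le_Tpol:
  assumes "\<And>s. V s \<le> Tp mu V s"
  shows "V s \<le> Jp mu s"
proof -
  have "al * (\<Sum>j\<in>UNIV. P (mu s) s j * (Jp mu j - V j)) + 0 \<le> Jp mu s - V s" for s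
    using Tpol_diff[of mu "Jp mu" s V] Tpol_Jpol assms[of s] by (metis add_0_right diff_left_mono)
  then have "0 / (1 - al) \<le> Jp mu s - V s" by (rule discounted_supersolution_ge)
  then show ?thesis by simp
qed

lemma Jpol_le_Jstar: "Jp mu s \<le> Js s"
  unfolding Jstar_def by (rule Max_ge) auto

lemma Jstar_attained: "\<exists>mu. Js s = Jp mu s"
  unfolding Jstar_def by (rule Max_range_attained)

lemma Jstar_minus_Jpol_bounds: "0 \<le> Js s - Jp mu s \<and> Js s - Jp mu s \<le> 1 / (1 - al)"
proof -
  obtain nu where "Js s = Jp nu s" using Jstar_attained by blast
  then show ?thesis using Jpol_bounds[of mu s] Jpol_bounds[of nu s] Jpol_le_Jstar[of mu s] by linarith
qed

lemma Jpol_le_Tbell_Jpol: "Jp mu s \<le> Tb (Jp mu) s"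
  using Tpol_le_Tbell[of mu "Jp mu" s] by (simp add: Tpol_Jpol)

text \<open>\<open>Js \<le> Tb Js\<close> holds statewise, using a policy optimal at that state; conversely the value
  of a greedy policy for \<open>Js\<close> dominates \<open>Js\<close>, hence also \<open>Tb Js\<close>.\<close>

lemma Tbell_Jstar: "Tb Js = Js"
proof
  fix s
  have Js_le: "Js s \<le> Tb Js s" for s
  proof -
    obtain mu where "Js s = Jp mu s" using Jstar_attained by blast
    also have "\<dots> = Tp mu (Jp mu) s" by (simp add: Tpol_Jpol)
    also have "\<dots> \<le> Tp mu Js s" by (intro Tpol_mono Jpol_le_Jstar)
    also have "\<dots> \<le> Tb Js s" by (rule Tpol_le_Tbell)
    finally show ?thesis .
  qed
  obtain mu where greedy: "\<And>s. Tp mu Js s = Tb Js s" using greedy_policy_exists by blast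
  have "Js j \<le> Jp mu j" for j by (rule Jpol_ge_of_le_Tpol) (simp add: greedy Js_le)
  then have "Tp mu Js s \<le> Tp mu (Jp mu) s" by (rule Tpol_mono)
  then have "Tb Js s \<le> Jp mu s" by (simp add: greedy Tpol_Jpol)
  then show "Tb Js s = Js s" using Js_le[of s] Jpol_le_Jstar[of mu s] by simp
qed

lemma Tbell_funpow_Jstar: "(Tb ^^ n) Js = Js"
  by (induction n) (simp_all add: Tbell_Jstar)

lemma Tbell_funpow_Suc_ge:
  assumes J: "\<And>x. \<bar>J x - Jp mu x\<bar> \<le> e"
  shows "(Tb ^^ n) J x - (al ^ Suc n + al ^ n) * e \<le> (Tb ^^ Suc n) J x"
proof -
  have "\<bar>(Tb ^^ n) J x - (Tb ^^ n) (Jp mu) x\<bar> \<le> al ^ n * e"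
    using J by (rule Tbell_funpow_dist_le)
  moreover have "\<bar>(Tb ^^ Suc n) J x - (Tb ^^ Suc n) (Jp mu) x\<bar> \<le> al ^ Suc n * e"
    using J by (rule Tbell_funpow_dist_le)
  moreover have "(Tb ^^ n) (Jp mu) x \<le> (Tb ^^ n) (Tb (Jp mu)) x"
    by (intro Tbell_funpow_mono Jpol_le_Tbell_Jpol)
  ultimately show ?thesis by (simp add: funpow_swap1 abs_le_iff algebra_simps)
qed

text \<open>The difference \<open>Jp mu' - Tb^(n+1) J\<close> dominates its own discounted average up to a
  constant, which \<open>Tbell_funpow_Suc_ge\<close> controls.\<close>

lemma lookahead_policy_ge:
  assumes J: "\<And>x. \<bar>J x - Jp mu x\<bar> \<le> e"
    and lookahead: "\<And>s. \<bar>(Tb ^^ Suc n) J s - Tp mu' ((Tb ^^ n) J) s\<bar> \<le> eps"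
  shows "(Tb ^^ Suc n) J s - ((al ^ Suc (Suc n) + al ^ Suc n) * e + eps) / (1 - al) \<le> Jp mu' s"
proof -
  let ?V = "(Tb ^^ n) J"
  let ?z = "\<lambda>s. Jp mu' s - (Tb ^^ Suc n) J s"
  let ?d = "(al ^ Suc n + al ^ n) * e"
  have "al * (\<Sum>j\<in>UNIV. P (mu' s) s j * ?z j) + - (al * ?d + eps) \<le> ?z s" for s
  proof -
    have "- ?d \<le> (\<Sum>j\<in>UNIV. P (mu' s) s j * ((Tb ^^ Suc n) J j - ?V j))"
      using Tbell_funpow_Suc_ge[OF J] by (intro transition_avg_ge) (simp add: algebra_simps)
    then have "- (al * ?d) \<le> al * (\<Sum>j\<in>UNIV. P (mu' s) s j * ((Tb ^^ Suc n) J j - ?V j))"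
      using al_pos mult_left_mono by fastforce
    moreover have "(\<Sum>j\<in>UNIV. P (mu' s) s j * (Jp mu' j - ?V j))
        = (\<Sum>j\<in>UNIV. P (mu' s) s j * ?z j)
          + (\<Sum>j\<in>UNIV. P (mu' s) s j * ((Tb ^^ Suc n) J j - ?V j))"
      by (simp add: algebra_simps flip: sum.distrib)
    then have "Jp mu' s - Tp mu' ?V s
        = al * (\<Sum>j\<in>UNIV. P (mu' s) s j * ?z j)
          + al * (\<Sum>j\<in>UNIV. P (mu' s) s j * ((Tb ^^ Suc n) J j - ?V j))"
      using Tpol_diff[of mu' "Jp mu'" s ?V] by (simp add: Tpol_Jpol distrib_left)
    moreover have "- eps \<le> Tp mu' ?V s - (Tb ^^ Suc n) J s"
      using lookahead[of s] by (simp add: abs_le_iff)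
    ultimately show ?thesis by linarith
  qed
  then have "- (al * ?d + eps) / (1 - al) \<le> ?z s"
    by (rule discounted_supersolution_ge)
  moreover have "- (al * ?d + eps) / (1 - al)
      = - (((al ^ Suc (Suc n) + al ^ Suc n) * e + eps) / (1 - al))"
    using al_less_1 by (simp add: field_simps)
  ultimately show ?thesis by linarith
qed

lemma lookahead_policy_error_le:
  assumes H: "1 \<le> H"
    and J: "\<And>x. \<bar>J x - Jp mu x\<bar> \<le> e"
    and a: "\<And>x. \<bar>Jp mu x - Js x\<bar> \<le> a"
    and lookahead: "\<And>s. \<bar>(Tb ^^ H) J s - Tp mu' ((Tb ^^ (H - 1)) J) s\<bar> \<le> eps"
  shows "\<bar>Jp mu' s - Js s\<bar> \<le> al ^ H * a + (2 * al ^ H * e + eps) / (1 - al)"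
proof -
  obtain n where n: "H = Suc n" using H by (cases H) auto
  have "\<bar>Js y - J y\<bar> \<le> a + e" for y
    using a[of y] J[of y] by (simp add: abs_le_iff)
  then have "\<bar>(Tb ^^ H) Js s - (Tb ^^ H) J s\<bar> \<le> al ^ H * (a + e)"
    by (rule Tbell_funpow_dist_le)
  then have "Js s - (Tb ^^ H) J s \<le> al ^ H * (a + e)"
    by (simp add: Tbell_funpow_Jstar abs_le_iff)
  moreover have "(Tb ^^ H) J s - ((al ^ Suc H + al ^ H) * e + eps) / (1 - al) \<le> Jp mu' s"
    using lookahead_policy_ge[OF J] lookahead unfolding n by simp
  moreover have "al ^ H * (a + e) + ((al ^ Suc H + al ^ H) * e + eps) / (1 - al)
      = al ^ H * a + (2 * al ^ H * e + eps) / (1 - al)"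
    using al_less_1 by (simp add: field_simps)
  moreover have "Jp mu' s \<le> Js s" by (rule Jpol_le_Jstar)
  ultimately show ?thesis by (simp add: abs_le_iff)
qed

lemma rollout_error_le:
  assumes J: "\<And>x. \<bar>J x - Jp mu x\<bar> \<le> e"
  shows "\<bar>(Tp mu' ^^ m) ((Tb ^^ n) J) x - Jp mu' x\<bar>
         \<le> al ^ m * (al ^ n * (e + 1 / (1 - al)) + 1 / (1 - al))"
proof -
  have "\<bar>J y - Js y\<bar> \<le> e + 1 / (1 - al)" for y
    using J[of y] Jstar_minus_Jpol_bounds[of y mu] by (simp add: abs_le_iff)
  then have "\<bar>(Tb ^^ n) J y - Js y\<bar> \<le> al ^ n * (e + 1 / (1 - al))" for y
    using Tbell_funpow_dist_le[of J Js] by (simp add: Tbell_funpow_Jstar)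
  then have "\<bar>(Tb ^^ n) J y - Jp mu' y\<bar> \<le> al ^ n * (e + 1 / (1 - al)) + 1 / (1 - al)" for y
    using Jstar_minus_Jpol_bounds[of y mu'] by (smt (verit))
  then show ?thesis
    using Tpol_funpow_dist_le[where X="(Tb ^^ n) J" and Y="Jp mu'" and mu=mu' and n=m]
    by (simp add: Tpol_funpow_Jpol)
qed

lemma projected_rollout_error_le:
  assumes J: "\<And>x. \<bar>J x - Jp mu x\<bar> \<le> e"
    and w: "\<And>s. \<bar>w s\<bar> \<le> epsPE"
    and opnorm: "opnorm (Mproj phi D) \<le> dFV"
    and approx: "\<And>s. \<bar>Mproj phi D (Jp mu') s - Jp mu' s\<bar> \<le> dapp"
  shows "\<bar>Mproj phi D (\<lambda>s. (Tp mu' ^^ m) ((Tb ^^ n) J) s + w s) s - Jp mu' s\<bar>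
         \<le> al ^ (m + n) * dFV * e + ((al ^ m + al ^ (m + n)) / (1 - al) * dFV + dapp + dFV * epsPE)"
proof -
  let ?Y = "\<lambda>s. (Tp mu' ^^ m) ((Tb ^^ n) J) s + w s - Jp mu' s"
  let ?K = "al ^ m * (al ^ n * (e + 1 / (1 - al)) + 1 / (1 - al)) + epsPE"
  have Y: "\<bar>?Y x\<bar> \<le> ?K" for x
    using rollout_error_le[OF J, where mu'=mu' and m=m and n=n and x=x] w[of x] by (simp add: abs_le_iff)
  then have "0 \<le> ?K" by (meson abs_ge_zero order_trans)
  then have "\<bar>Mproj phi D ?Y s\<bar> \<le> dFV * ?K"
    using abs_Mproj_le[OF Y, where phi=phi and D=D and t=s] opnorm by (meson mult_right_mono order_trans)
  moreover have "Mproj phi D (\<lambda>s. (Tp mu' ^^ m) ((Tb ^^ n) J) s + w s) s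
      = Mproj phi D ?Y s + Mproj phi D (Jp mu') s"
    using Mproj_add[of phi D ?Y "Jp mu'" s] by simp
  moreover have "dFV * ?K + dapp
      = al ^ (m + n) * dFV * e + ((al ^ m + al ^ (m + n)) / (1 - al) * dFV + dapp + dFV * epsPE)"
    using al_less_1 by (simp add: field_simps power_add)
  ultimately show ?thesis using approx[of s] by (simp add: abs_le_iff)
qed

end

section \<open>Least-squares approximate policy iteration\<close>

lemma power_mult_less_1_of_ln_bound:
  fixes al d :: real
  assumes al: "0 < al" "al < 1" and d: "0 \<le> d" and n: "ln d / ln (1 / al) < real n"
  shows "al ^ n * d < 1"
proof (cases "d = 0")
  case False
  then have "0 < d" using d by simp
  have "0 < ln (1 / al)" using al by simp
  then have "ln d < ln ((1 / al) ^ n)"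
    using n al by (simp add: divide_less_eq ln_realpow mult.commute)
  then have "d < (1 / al) ^ n" using \<open>0 < d\<close> al by simp
  then show ?thesis using al by (simp add: power_one_over field_simps)
qed simp

locale least_squares_api = mdp P r al
  for P :: "'a::finite \<Rightarrow> 's::finite \<Rightarrow> 's \<Rightarrow> real" and r al +
  fixes phi :: "'s \<Rightarrow> real^'d"
    and D :: "nat \<Rightarrow> 's set"
    and J :: "nat \<Rightarrow> 's \<Rightarrow> real"
    and mu :: "nat \<Rightarrow> 's \<Rightarrow> 'a"
    and w :: "nat \<Rightarrow> 's \<Rightarrow> real"
    and m H :: nat
    and epsLA epsPE :: real
  assumes H_pos: "1 \<le> H"
    and epsLA_nonneg: "0 \<le> epsLA" and epsPE_nonneg: "0 \<le> epsPE"
    and lookahead: "\<And>k. supnorm (\<lambda>s. (Tb ^^ H) (J k) s - Tp (mu (Suc k)) ((Tb ^^ (H - 1)) (J k)) s)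
                      \<le> epsLA"
    and noise_bound: "\<And>k. supnorm (w (Suc k)) \<le> epsPE"
    and update: "\<And>k. J (Suc k) = Mproj phi (D k)
                   (\<lambda>s. (Tp (mu (Suc k)) ^^ m) ((Tb ^^ (H - 1)) (J k)) s + w (Suc k) s)"
    and bdd_above_opnorm: "bdd_above ((\<lambda>k. opnorm (Mproj phi (D (k - 1)))) ` {1..})"
    and FV_condition: "ln (SUP k\<in>{1..}. opnorm (Mproj phi (D (k - 1)))) / ln (1 / al)
                         < real (m + H - 1)"
begin

definition delta_FV :: real where
  "delta_FV = (SUP k\<in>{1..}. opnorm (Mproj phi (D (k - 1))))"

definition delta_app :: real where
  "delta_app = (SUP p\<in>{1..} \<times> (UNIV :: ('s \<Rightarrow> 'a) set).
                  supnorm (\<lambda>s. Mproj phi (D (fst p - 1)) (Jp (snd p)) s - Jp (snd p) s))"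

definition beta :: real where
  "beta = al ^ (m + H - 1) * delta_FV"

definition tau :: real where
  "tau = (al ^ m + al ^ (m + H - 1)) / (1 - al) * delta_FV + delta_app + delta_FV * epsPE"

definition eval_error :: "nat \<Rightarrow> real" where
  "eval_error k = supnorm (\<lambda>s. J k s - Jp (mu k) s)"

definition policy_error :: "nat \<Rightarrow> real" where
  "policy_error k = supnorm (\<lambda>s. Jp (mu k) s - Js s)"

lemma opnorm_le_delta_FV: "opnorm (Mproj phi (D k)) \<le> delta_FV"
  using cSUP_upper[OF _ bdd_above_opnorm, of "Suc k"] unfolding delta_FV_def by simp

lemma delta_FV_nonneg: "0 \<le> delta_FV"
  using opnorm_Mproj_nonneg opnorm_le_delta_FV order_trans by blast

lemma beta_nonneg: "0 \<le> beta"
  unfolding beta_def using al_pos delta_FV_nonneg by simp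

lemma beta_less_1: "beta < 1"
  unfolding beta_def
  using power_mult_less_1_of_ln_bound[OF al_pos al_less_1 delta_FV_nonneg] FV_condition
  unfolding delta_FV_def by blast

lemma Mproj_Jpol_error_le: "\<bar>Mproj phi (D k) (Jp nu) s - Jp nu s\<bar> \<le> delta_app"
proof -
  have Jp_bound: "\<bar>Jp nu' x\<bar> \<le> 1 / (1 - al)" for nu' x
    using Jpol_bounds[of nu' x] by simp
  have "supnorm (\<lambda>s. Mproj phi (D j) (Jp nu') s - Jp nu' s) \<le> delta_FV / (1 - al) + 1 / (1 - al)"
    for j nu'
  proof (rule supnorm_leI)
    fix s
    have "\<bar>Mproj phi (D j) (Jp nu') s\<bar> \<le> opnorm (Mproj phi (D j)) * (1 / (1 - al))"
      using Jp_bound by (rule abs_Mproj_le)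
    also have "\<dots> \<le> delta_FV * (1 / (1 - al))"
      using opnorm_le_delta_FV al_less_1 by (intro mult_right_mono) auto
    finally show "\<bar>Mproj phi (D j) (Jp nu') s - Jp nu' s\<bar> \<le> delta_FV / (1 - al) + 1 / (1 - al)"
      using Jp_bound[of nu' s] by (simp add: abs_le_iff)
  qed
  then have "bdd_above ((\<lambda>p. supnorm (\<lambda>s. Mproj phi (D (fst p - 1)) (Jp (snd p)) s - Jp (snd p) s))
                         ` ({1..} \<times> (UNIV :: ('s \<Rightarrow> 'a) set)))"
    by (intro bdd_aboveI2) blast
  from cSUP_upper[OF _ this, of "(Suc k, nu)"]
  have "supnorm (\<lambda>s. Mproj phi (D k) (Jp nu) s - Jp nu s) \<le> delta_app"
    unfolding delta_app_def by simp
  then show ?thesis using abs_le_supnorm order_trans by fast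
qed

lemma tau_nonneg: "0 \<le> tau"
proof -
  have "0 \<le> delta_app"
    using Mproj_Jpol_error_le[of 0 "mu 0" undefined] by linarith
  then show ?thesis unfolding tau_def
    using delta_FV_nonneg al_pos al_less_1 epsPE_nonneg by simp
qed

lemma eval_error_Suc_le: "eval_error (Suc k) \<le> beta * eval_error k + tau"
  unfolding eval_error_def[of "Suc k"]
proof (rule supnorm_leI)
  fix s
  have "\<bar>w (Suc k) x\<bar> \<le> epsPE" for x
    using abs_le_supnorm noise_bound order_trans by blast
  then have "\<bar>J (Suc k) s - Jp (mu (Suc k)) s\<bar>
      \<le> al ^ (m + (H - 1)) * delta_FV * eval_error k
        + ((al ^ m + al ^ (m + (H - 1))) / (1 - al) * delta_FV + delta_app + delta_FV * epsPE)"
    unfolding update eval_error_def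
    by (intro projected_rollout_error_le[where mu="mu k"] abs_le_supnorm
        opnorm_le_delta_FV Mproj_Jpol_error_le)
  then show "\<bar>J (Suc k) s - Jp (mu (Suc k)) s\<bar> \<le> beta * eval_error k + tau"
    using H_pos unfolding beta_def tau_def by simp
qed

lemma policy_error_Suc_le:
  "policy_error (Suc k) \<le> al ^ H * policy_error k + 1 / (1 - al) * (2 * al ^ H * eval_error k + epsLA)"
  unfolding policy_error_def[of "Suc k"]
proof (rule supnorm_leI)
  fix s
  have "\<bar>Jp (mu (Suc k)) s - Js s\<bar> \<le> al ^ H * policy_error k + (2 * al ^ H * eval_error k + epsLA) / (1 - al)"
    using H_pos lookahead
    by (intro lookahead_policy_error_le) (auto simp: eval_error_def policy_error_def abs_le_supnorm
        intro: order_trans[OF abs_le_supnorm])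
  then show "\<bar>Jp (mu (Suc k)) s - Js s\<bar>
      \<le> al ^ H * policy_error k + 1 / (1 - al) * (2 * al ^ H * eval_error k + epsLA)"
    by simp
qed

lemma policy_error_le:
  "policy_error k \<le> al ^ (k * H) / (1 - al)
     + 2 * al ^ H * eval_error 0 / (1 - al) * real k * max (al ^ H) beta ^ (k - 1)
     + (2 * al ^ H * (tau / (1 - beta)) + epsLA) / ((1 - al ^ H) * (1 - al))"
proof -
  have "al ^ H < 1" using al_pos al_less_1 H_pos by (simp add: power_less_one_iff)
  have "policy_error 0 \<le> 1 / (1 - al)"
    unfolding policy_error_def
    using Jstar_minus_Jpol_bounds by (intro supnorm_leI) (simp add: abs_le_iff)
  then have "al ^ (k * H) * policy_error 0 \<le> al ^ (k * H) / (1 - al)"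
    using al_pos by (simp add: mult_left_mono divide_inverse)
  moreover have "policy_error k \<le> (al ^ H) ^ k * policy_error 0
      + 1 / (1 - al) * (2 * al ^ H * eval_error 0) * real k * max (al ^ H) beta ^ (k - 1)
      + 1 / (1 - al) * (2 * al ^ H * (tau / (1 - beta)) + epsLA) / (1 - al ^ H)"
    using al_pos al_less_1 \<open>al ^ H < 1\<close> beta_nonneg beta_less_1 tau_nonneg epsLA_nonneg
      supnorm_nonneg eval_error_Suc_le policy_error_Suc_le
    by (intro coupled_recurrence_le) (auto simp: eval_error_def)
  ultimately show ?thesis by (simp add: power_mult mult.commute)
qed

end

theorem theorem1:
  fixes P :: "'a::finite \<Rightarrow> 's::finite \<Rightarrow> 's \<Rightarrow> real"
    and r :: "'s \<Rightarrow> 'a \<Rightarrow> real"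
    and al :: real
    and phi :: "'s \<Rightarrow> real^'d"
    and D :: "nat \<Rightarrow> 's set"
    and J :: "nat \<Rightarrow> 's \<Rightarrow> real"
    and mu :: "nat \<Rightarrow> 's \<Rightarrow> 'a"
    and w :: "nat \<Rightarrow> 's \<Rightarrow> real"
    and m H :: nat
    and epsLA epsPE :: real
  assumes P_nonneg: "\<And>a i j. P a i j \<ge> 0"
    and P_stoch: "\<And>a i. (\<Sum>j\<in>UNIV. P a i j) = 1"
    and r_bounds: "\<And>s a. 0 \<le> r s a \<and> r s a \<le> 1"
    and al: "0 < al" "al < 1"
    and mH: "m \<ge> 1" "H \<ge> 1"
    and eps: "epsLA \<ge> 0" "epsPE \<ge> 0"
    and rank: "\<And>k. dim (phi ` D k) = CARD('d)"
    and lookahead: "\<And>k. supnorm (\<lambda>s. ((Tbell P r al ^^ H) (J k)) s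
                       - Tpol P r al (mu (Suc k)) ((Tbell P r al ^^ (H - 1)) (J k)) s) \<le> epsLA"
    and noise_supp: "\<And>k i. i \<notin> D k \<Longrightarrow> w (Suc k) i = 0"
    and noise_bd: "\<And>k. supnorm (w (Suc k)) \<le> epsPE"
    and update: "\<And>k. J (Suc k) = Mproj phi (D k)
                    (\<lambda>s. ((Tpol P r al (mu (Suc k)) ^^ m) ((Tbell P r al ^^ (H - 1)) (J k))) s
                         + w (Suc k) s)"
    and FV_finite: "bdd_above ((\<lambda>k. opnorm (Mproj phi (D (k - 1)))) ` {1..})"
    and cond: "real (m + H - 1) >
       ln (SUP k\<in>{1..}. opnorm (Mproj phi (D (k - 1)))) / ln (1 / al)"
  shows "\<forall>k\<ge>1.
    (let dFV = (SUP k\<in>{1..}. opnorm (Mproj phi (D (k - 1))));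
         dapp = (SUP p\<in>{1..} \<times> (UNIV :: ('s \<Rightarrow> 'a) set).
                   supnorm (\<lambda>s. Mproj phi (D (fst p - 1)) (Jpol P r al (snd p)) s
                                 - Jpol P r al (snd p) s));
         tau = (al ^ m + al ^ (m + H - 1)) / (1 - al) * dFV + dapp + dFV * epsPE;
         beta = al ^ (m + H - 1) * dFV
     in supnorm (\<lambda>s. Jpol P r al (mu k) s - Jstar P r al s)
        \<le> al ^ (k * H) / (1 - al)
          + 2 * al ^ H * supnorm (\<lambda>s. Jpol P r al (mu 0) s - J 0 s) / (1 - al)
              * real k * (max (al ^ H) beta) ^ (k - 1)
          + (2 * al ^ H * (tau / (1 - beta)) + epsLA) / ((1 - al ^ H) * (1 - al)))"
proof -
  interpret least_squares_api P r al phi D J mu w m H epsLA epsPE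
    by unfold_locales (use assms in auto)
  have "supnorm (\<lambda>s. Jpol P r al (mu 0) s - J 0 s) = eval_error 0"
    unfolding eval_error_def by (rule supnorm_minus_commute)
  then show ?thesis
    using policy_error_le
    unfolding Let_def delta_FV_def[symmetric] delta_app_def[symmetric]
      tau_def[symmetric] beta_def[symmetric] policy_error_def
    by simp
qed

end
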